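(* Let $K\subseteq\mathbb{R}^n$ be a closed proper convex cone with nonempty interior, $g:[0,\pi]\to\mathbb{R}$ continuous and strictly increasing, and $\psi(w)=\int_{K_1} g(\rho(w,y))\,d\sigma(y)$ for $w\in\mathcal{S}^{n-1}$. Then every local minimum point of $\psi$ on $\mathcal{S}^{n-1}$ lies in $\hat K\cup(-\hat K)$, and every global minimum point of $\psi$ lies in $K\cap\hat K$.
   Context: $\mathcal{S}^{n-1}$ is the Euclidean unit sphere in $\mathbb{R}^n$, $\sigma$ the normalized uniform measure on it, $\rho(w,y)=\arccos\langle w,y\rangle$ the geodesic distance. For $A\subseteq\mathbb{R}^n$, $A_1=A\cap\mathcal{S}^{n-1}$ and $\hat A=\{x\in\mathbb{R}^n:\langle x,v\rangle\ge 0\ \forall v\in A\}$. A convex cone is proper if it is contained in some closed halfspace through the origin. *)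

theory Defs
  imports "HOL-Analysis.Analysis"
begin

text \<open>Normalized uniform (rotation-invariant) probability measure on the unit sphere:
  the push-forward of the uniform probability measure on the unit ball under the
  radial projection x \<mapsto> x / norm x (cone-measure construction).\<close>
definition sphere_measure :: "'a::euclidean_space measure" where
  "sphere_measure = distr (uniform_measure lborel (ball 0 1)) borel (\<lambda>x. x /\<^sub>R norm x)"

definition geod :: "'a::euclidean_space \<Rightarrow> 'a \<Rightarrow> real" where
  "geod w y = arccos (w \<bullet> y)"

definition dual_cone :: "'a::euclidean_space set \<Rightarrow> 'a set" where
  "dual_cone A = {x. \<forall>v\<in>A. x \<bullet> v \<ge> 0}"

definition proper_cone :: "'a::euclidean_space set \<Rightarrow> bool" where
  "proper_cone K \<longleftrightarrow> (\<exists>a. a \<noteq> 0 \<and> K \<subseteq> {x. a \<bullet> x \<le> 0})"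

definition psi :: "('a::euclidean_space) set \<Rightarrow> (real \<Rightarrow> real) \<Rightarrow> 'a \<Rightarrow> real" where
  "psi K g w = (LINT y:(K \<inter> sphere 0 1)|sphere_measure. g (geod w y))"

end

theory Submission
  imports Defs
begin

(* Write A = K \<inter> S for the part of the sphere S in the
   cone, and for a unit vector h let R y = y - 2 (h \<bullet> y) h be the reflection in h\<^sup>\<bottom>.
   Since the normalized sphere measure is invariant under linear isometries, substituting
   y := R y shows that psi w - psi (R w) is the integral of a function that is nonnegative
   whenever h \<bullet> w < 0 and R maps the part of A with h \<bullet> y < 0 back into K; it is strictly
   positive on the points y of A with h \<bullet> y > 0 and R y \<notin> K.  If such points fill an open
   piece of the sphere, then psi (R w) < psi w ("descent lemma").
   (1) Local minima: if w is in neither the dual cone nor its negative, the hyperplane w\<^sup>\<bottom>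
       cuts the interior of K, so there is a unit h in the interior of K with h \<bullet> w < 0 as
       close to 0 as we like; then R w is arbitrarily close to w and psi (R w) < psi w.
   (2) Global minima: if w \<notin> K, a separating hyperplane gives h in the dual cone with
       h \<bullet> w < 0, and the descent lemma again applies.  Since K and -dual(K) meet only in 0,
       the global minimiser, which is also a local one, lies in K \<inter> dual(K). *)

section \<open>Lebesgue measure is invariant under linear isometries\<close>

text \<open>The library proves orthogonal invariance only for \<open>real^'n\<close> with a well-ordered
  index type.  We index coordinates by the basis of an arbitrary Euclidean space.\<close>

typedef (overloaded) ('a::euclidean_space) basis_idx = "Basis :: 'a set"
  morphisms basis_vec basis_idx
  using nonempty_Basis by blast

instance basis_idx :: (euclidean_space) finite
proof
  have "x \<in> basis_idx ` (Basis :: 'a set)" for x :: "'a basis_idx"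
    by (cases x) auto
  then have "(UNIV :: 'a basis_idx set) = basis_idx ` (Basis :: 'a set)" by blast
  then show "finite (UNIV :: 'a basis_idx set)" by (metis finite_Basis finite_imageI)
qed

text \<open>Any order works; we pull back the order of \<open>nat\<close> along the injection \<open>to_nat\<close>.\<close>

instantiation basis_idx :: (euclidean_space) linorder
begin
definition less_eq_basis_idx :: "'a basis_idx \<Rightarrow> 'a basis_idx \<Rightarrow> bool" where
  "less_eq_basis_idx x y \<longleftrightarrow> to_nat x \<le> to_nat y"
definition less_basis_idx :: "'a basis_idx \<Rightarrow> 'a basis_idx \<Rightarrow> bool" where
  "less_basis_idx x y \<longleftrightarrow> to_nat x < to_nat y"
instance
proof
  fix x y z :: "'a basis_idx"
  show "(x < y) = (x \<le> y \<and> \<not> y \<le> x)" "x \<le> x" "x \<le> y \<or> y \<le> x"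
    unfolding less_eq_basis_idx_def less_basis_idx_def by linarith+
  show "x \<le> y \<Longrightarrow> y \<le> z \<Longrightarrow> x \<le> z" unfolding less_eq_basis_idx_def by linarith
  show "x \<le> y \<Longrightarrow> y \<le> x \<Longrightarrow> x = y" unfolding less_eq_basis_idx_def
    by (metis inj_to_nat injD le_antisym)
qed
end

instance basis_idx :: (euclidean_space) wellorder
proof
  fix P :: "'a basis_idx \<Rightarrow> bool" and a
  assume step: "\<And>x. (\<And>y. y < x \<Longrightarrow> P y) \<Longrightarrow> P x"
  have "\<forall>x. to_nat x = n \<longrightarrow> P x" for n
    by (induction n rule: less_induct) (metis step less_basis_idx_def)
  then show "P a" by blast
qed

lemma basis_vec_inner: "basis_vec i \<bullet> basis_vec j = (if i = j then 1 else 0)"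
  using basis_vec[of i] basis_vec[of j] basis_vec_inject[of i j]
  by (auto simp: inner_not_same_Basis)

lemma range_basis_vec: "range basis_vec = Basis"
  using type_definition.Rep_range[OF type_definition_basis_idx] by simp

lemma inj_basis_vec: "inj basis_vec"
  by (meson injI basis_vec_inject)

lemma sum_basis_idx: "(\<Sum>i\<in>UNIV. f (basis_vec i)) = (\<Sum>b\<in>(Basis::'a::euclidean_space set). f b)"
proof -
  have "sum f (Basis::'a set) = sum f (range basis_vec)" by (simp only: range_basis_vec)
  then show ?thesis by (simp add: sum.reindex[OF inj_basis_vec] comp_def)
qed

lemma prod_basis_idx: "(\<Prod>i\<in>UNIV. f (basis_vec i)) = (\<Prod>b\<in>(Basis::'a::euclidean_space set). f b)"
proof -
  have "prod f (Basis::'a set) = prod f (range basis_vec)" by (simp only: range_basis_vec)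
  then show ?thesis by (simp add: prod.reindex[OF inj_basis_vec] comp_def)
qed

lemma all_basis_idx: "(\<forall>b\<in>(Basis::'a::euclidean_space set). P b) \<longleftrightarrow> (\<forall>i. P (basis_vec i))"
  by (metis range_basis_vec rangeI rangeE)

definition coords :: "'a::euclidean_space \<Rightarrow> real^('a basis_idx)" where
  "coords x = (\<chi> i. x \<bullet> basis_vec i)"

definition of_coords :: "real^('a::euclidean_space basis_idx) \<Rightarrow> 'a" where
  "of_coords v = (\<Sum>i\<in>UNIV. (v $ i) *\<^sub>R basis_vec i)"

lemma of_coords_coords: "of_coords (coords x) = x"
  unfolding of_coords_def coords_def using sum_basis_idx[of "\<lambda>b. (x \<bullet> b) *\<^sub>R b"]
  by (simp add: euclidean_representation)

lemma of_coords_inner: "of_coords v \<bullet> basis_vec j = v $ j"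
  by (simp add: of_coords_def inner_sum_left basis_vec_inner if_distrib cong: if_cong)

lemma coords_of_coords: "coords (of_coords v) = v"
  unfolding coords_def by (simp add: of_coords_inner vec_eq_iff)

lemma linear_coords: "linear coords"
  by (rule linearI) (simp_all add: coords_def vec_eq_iff inner_add_left)

lemma linear_of_coords: "linear of_coords"
  by (rule linearI) (simp_all add: of_coords_def scaleR_add_left sum.distrib scaleR_sum_right)

lemma norm_coords: "norm (coords x) = norm x"
proof -
  have "coords x \<bullet> coords x = (\<Sum>b\<in>Basis. (x \<bullet> b) * (x \<bullet> b))"
    using sum_basis_idx[of "\<lambda>b. (x \<bullet> b) * (x \<bullet> b)"] by (simp add: coords_def inner_vec_def)
  then show ?thesis by (simp add: norm_eq_sqrt_inner euclidean_inner[symmetric])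
qed

lemma norm_of_coords: "norm (of_coords v) = norm v"
  by (metis coords_of_coords norm_coords)

lemma linear_borel_measurable:
  fixes f :: "'a::euclidean_space \<Rightarrow> 'b::euclidean_space"
  assumes "linear f" shows "f \<in> borel_measurable borel"
  using assms by (intro borel_measurable_continuous_onI linear_continuous_on)
    (simp add: linear_conv_bounded_linear)

lemma distr_lborel_coords: "distr lborel borel (coords :: 'a::euclidean_space \<Rightarrow> _) = lborel"
proof (rule lborel_eqI[symmetric])
  fix l u :: "real^'a basis_idx"
  assume le: "\<And>b. b \<in> Basis \<Longrightarrow> l \<bullet> b \<le> u \<bullet> b"
  have le': "l$i \<le> u$i" for i using le[of "axis i 1"] by (simp add: inner_axis)
  have pre: "coords -` box l u = box (of_coords l) (of_coords u)"
    by (auto simp: mem_box_cart mem_box all_basis_idx coords_def of_coords_inner)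
  have "emeasure (distr lborel borel coords) (box l u) = emeasure lborel (box (of_coords l) (of_coords u))"
    using linear_borel_measurable[OF linear_coords, measurable] by (simp add: emeasure_distr pre)
  also have "\<dots> = ennreal (\<Prod>b\<in>Basis. (of_coords u - of_coords l) \<bullet> (b::'a))"
    using le' by (simp add: emeasure_lborel_box_eq all_basis_idx inner_diff_left of_coords_inner)
  also have "(\<Prod>b\<in>Basis. (of_coords u - of_coords l) \<bullet> (b::'a)) = (\<Prod>i\<in>UNIV. (u - l) $ i)"
    by (simp add: prod_basis_idx[symmetric] inner_diff_left of_coords_inner)
  also have "\<dots> = (\<Prod>b\<in>Basis. (u - l) \<bullet> b)"
  proof -
    have B: "(Basis :: (real^'a basis_idx) set) = range (\<lambda>i. axis i 1)" by (auto simp: Basis_vec_def)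
    show ?thesis unfolding B by (subst prod.reindex) (auto simp: inj_on_def axis_eq_axis inner_axis)
  qed
  finally show "emeasure (distr lborel borel coords) (box l u) = ennreal (\<Prod>b\<in>Basis. (u - l) \<bullet> b)" .
qed simp

lemma distr_lborel_orthogonal_vec:
  fixes R :: "real^'n::{finite,wellorder} \<Rightarrow> real^'n::{finite,wellorder}"
  assumes R: "orthogonal_transformation R"
  shows "distr lborel borel R = lborel"
proof (rule lborel_eqI[symmetric])
  fix l u :: "real^'n::{finite,wellorder}"
  assume le: "\<And>b. b \<in> Basis \<Longrightarrow> l \<bullet> b \<le> u \<bullet> b"
  have Rm[measurable]: "R \<in> borel_measurable borel"
    using R by (simp add: orthogonal_transformation_linear linear_borel_measurable)
  let ?S = "inv R ` box l u"
  have pre: "R -` box l u = ?S"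
    using orthogonal_transformation_bij[OF R] by (simp add: bij_vimage_eq_inv_image)
  have "?S \<in> sets borel"
    unfolding pre[symmetric] using measurable_sets_borel[OF Rm, of "box l u"] by simp
  then have "emeasure (distr lborel borel R) (box l u) = emeasure lebesgue ?S"
    by (simp add: emeasure_distr pre)
  also have "\<dots> = measure lebesgue ?S"
    by (rule emeasure_eq_measure2)
      (rule measurable_orthogonal_image[OF orthogonal_transformation_inv[OF R]], simp)
  also have "\<dots> = measure lebesgue (box l u)"
    using measure_orthogonal_image[OF orthogonal_transformation_inv[OF R], of "box l u"] by simp
  also have "\<dots> = emeasure lborel (box l u)"
    by (simp add: emeasure_eq_measure2[symmetric])
  also have "\<dots> = ennreal (\<Prod>b\<in>Basis. (u - l) \<bullet> b)"
    using le by (simp add: emeasure_lborel_box_eq)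
  finally show "emeasure (distr lborel borel R) (box l u) = ennreal (\<Prod>b\<in>Basis. (u - l) \<bullet> b)" .
qed simp

text \<open>Transport along the coordinate isometry: \<open>R = of_coords \<circ> R' \<circ> coords\<close> with
  \<open>R'\<close> orthogonal on \<open>real^'a basis_idx\<close>.\<close>

lemma distr_lborel_isometry:
  fixes R :: "'a::euclidean_space \<Rightarrow> 'a"
  assumes lin: "linear R" and nr: "\<And>x. norm (R x) = norm x"
  shows "distr lborel borel R = lborel"
proof -
  define R' where "R' = coords \<circ> R \<circ> of_coords"
  have lin': "linear R'"
    unfolding R'_def by (intro linear_compose linear_coords linear_of_coords lin)
  have "orthogonal_transformation R'"
    using lin' by (simp add: orthogonal_transformation R'_def norm_coords nr norm_of_coords)
  then have dR': "distr lborel borel R' = lborel" by (rule distr_lborel_orthogonal_vec)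
  note [measurable] = linear_borel_measurable[OF lin] linear_borel_measurable[OF lin']
    linear_borel_measurable[OF linear_coords] linear_borel_measurable[OF linear_of_coords]
  have dOf: "distr lborel borel (of_coords :: _ \<Rightarrow> 'a) = lborel"
  proof -
    have "distr lborel borel (of_coords :: _ \<Rightarrow> 'a) = distr lborel borel (of_coords \<circ> coords)"
      by (subst distr_lborel_coords[symmetric]) (rule distr_distr; simp)
    then show ?thesis by (simp add: comp_def of_coords_coords distr_id2)
  qed
  have "R = of_coords \<circ> R' \<circ> coords" by (simp add: R'_def fun_eq_iff of_coords_coords)
  then have "distr lborel borel R = distr (distr (distr lborel borel coords) borel R') borel of_coords"
    by (simp add: distr_distr comp_assoc)
  also have "\<dots> = lborel" by (simp add: distr_lborel_coords dR' dOf)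
  finally show ?thesis .
qed

section \<open>The normalized sphere measure\<close>

lemma emeasure_lborel_open_pos:
  fixes U :: "'a::euclidean_space set"
  assumes "open U" "x \<in> U"
  shows "0 < emeasure lborel U"
proof -
  obtain e where "e > 0" "ball x e \<subseteq> U" using assms openE by blast
  then obtain a b where ab: "x \<in> box a b" "box a b \<subseteq> U"
    using rational_boxes[OF \<open>e > 0\<close>, of x] by (meson order_trans)
  then have "0 < emeasure lborel (box a b)"
    by (auto simp: emeasure_lborel_box_eq mem_box algebra_simps intro!: prod_pos)
  also have "\<dots> \<le> emeasure lborel U"
    using assms ab by (intro emeasure_mono) (auto intro: borel_open)
  finally show ?thesis .
qed

lemma sphere_measure_sgn: "sphere_measure = distr (uniform_measure lborel (ball 0 1)) borel sgn"
  by (simp add: sphere_measure_def sgn_div_norm[abs_def])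

lemma sets_sphere_measure [simp, measurable_cong]: "sets sphere_measure = sets borel"
  by (simp add: sphere_measure_sgn)

lemma space_sphere_measure [simp]: "space sphere_measure = UNIV"
  by (simp add: sphere_measure_sgn)

lemma emeasure_sphere_measure:
  assumes "A \<in> sets borel"
  shows "emeasure (sphere_measure :: 'a::euclidean_space measure) A
     = emeasure lborel (ball 0 1 \<inter> sgn -` A) / emeasure lborel (ball (0::'a) 1)"
  using assms
  by (simp add: sphere_measure_sgn emeasure_distr emeasure_uniform_measure
      measurable_cong_sets[OF sets_uniform_measure refl] measurable_sets_borel[OF borel_measurable_sgn])

lemma finite_measure_sphere_measure: "finite_measure (sphere_measure :: 'a::euclidean_space measure)"
proof (rule finite_measureI)
  have "emeasure lborel (ball (0::'a) 1) \<noteq> 0" "emeasure lborel (ball (0::'a) 1) \<noteq> \<infinity>"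
    using emeasure_lborel_open_pos[of "ball (0::'a) 1" 0] emeasure_lborel_ball_finite[of "0::'a" 1]
    by auto
  then have "emeasure (sphere_measure :: 'a measure) (space sphere_measure) = 1"
    by (simp add: emeasure_sphere_measure divide_eq_1_ennreal)
  then show "emeasure (sphere_measure :: 'a measure) (space sphere_measure) \<noteq> \<infinity>" by simp
qed

lemma emeasure_sphere_open_pos:
  fixes U :: "'a::euclidean_space set"
  assumes U: "open U" and p: "p \<in> U" "norm p = 1"
  shows "emeasure sphere_measure (U \<inter> sphere 0 1) \<noteq> 0"
proof -
  define V where "V = (ball (0::'a) 1 - {0}) \<inter> sgn -` U"
  have "continuous_on (ball (0::'a) 1 - {0}) sgn"
    by (intro continuous_on_sgn continuous_on_id) auto
  moreover have "open (ball (0::'a) 1 - {0})" by (simp add: open_Diff)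
  ultimately have "open V"
    using U by (auto simp: V_def continuous_on_open_vimage Int_commute)
  moreover have "p /\<^sub>R 2 \<in> V" using p by (auto simp: V_def sgn_div_norm)
  ultimately have "0 < emeasure lborel V" by (rule emeasure_lborel_open_pos)
  have "U \<inter> sphere 0 1 \<in> sets borel" using U by (intro sets.Int borel_open borel_closed) auto
  then have "sgn -` (U \<inter> sphere 0 1) \<in> sets borel"
    by (rule measurable_sets_borel[OF borel_measurable_sgn])
  then have "ball 0 1 \<inter> sgn -` (U \<inter> sphere 0 1) \<in> sets borel" by (intro sets.Int) auto
  then have "emeasure lborel V \<le> emeasure lborel (ball 0 1 \<inter> sgn -` (U \<inter> sphere 0 1))"
    by (intro emeasure_mono) (auto simp: V_def norm_sgn)
  with \<open>0 < emeasure lborel V\<close> \<open>U \<inter> sphere 0 1 \<in> sets borel\<close> show ?thesis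
    using emeasure_lborel_ball_finite[of "0::'a" 1]
    by (auto simp: emeasure_sphere_measure ennreal_divide_eq_0_iff)
qed

text \<open>Rotation invariance: linear isometries preserve the ball measure and commute with
  the radial projection.\<close>

lemma distr_sphere_measure_isometry:
  fixes R :: "'a::euclidean_space \<Rightarrow> 'a"
  assumes lin: "linear R" and nr: "\<And>x. norm (R x) = norm x"
  shows "distr sphere_measure borel R = sphere_measure"
proof -
  let ?M = "uniform_measure lborel (ball (0::'a) 1)"
  have Rm[measurable]: "R \<in> borel_measurable borel" by (rule linear_borel_measurable[OF lin])
  have Mm: "measurable ?M borel = measurable borel borel"
    by (rule measurable_cong_sets) auto
  have "distr ?M borel R = ?M"
  proof (rule measure_eqI)
    fix A assume "A \<in> sets (distr ?M borel R)"
    then have A[measurable]: "A \<in> sets borel" by simp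
    have "R -` (ball 0 1 \<inter> A) = ball 0 1 \<inter> R -` A" by (auto simp: nr)
    then have "emeasure lborel (ball 0 1 \<inter> R -` A) = emeasure lborel (ball 0 1 \<inter> A)"
      using distr_lborel_isometry[OF lin nr] emeasure_distr[of R lborel borel "ball 0 1 \<inter> A"]
      by simp
    then show "emeasure (distr ?M borel R) A = emeasure ?M A"
      by (simp add: emeasure_distr emeasure_uniform_measure Mm measurable_sets_borel[OF Rm A])
  qed simp
  moreover have "R \<circ> sgn = sgn \<circ> R"
    by (auto simp: fun_eq_iff sgn_div_norm nr linear_cmul[OF lin])
  ultimately show ?thesis
    unfolding sphere_measure_sgn
    by (metis (no_types) Mm distr_distr borel_measurable_sgn Rm)
qed

lemma integral_sphere_isometry:
  fixes R :: "'a::euclidean_space \<Rightarrow> 'a" and f :: "'a \<Rightarrow> real"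
  assumes "linear R" "\<And>x. norm (R x) = norm x" and [measurable]: "f \<in> borel_measurable borel"
  shows "(\<integral>y. f (R y) \<partial>sphere_measure) = (\<integral>y. f y \<partial>sphere_measure)"
proof -
  note [measurable] = linear_borel_measurable[OF assms(1)]
  have "(\<integral>y. f (R y) \<partial>sphere_measure) = (\<integral>y. f y \<partial>distr sphere_measure borel R)"
    by (rule integral_distr[symmetric]) auto
  then show ?thesis by (simp add: distr_sphere_measure_isometry[OF assms(1,2)])
qed

lemma integrable_sphere_bounded:
  fixes f :: "'a::euclidean_space \<Rightarrow> real"
  assumes "f \<in> borel_measurable borel" "\<And>y. \<bar>f y\<bar> \<le> C"
  shows "integrable sphere_measure f"
proof -
  interpret finite_measure "sphere_measure :: 'a measure" by (rule finite_measure_sphere_measure)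
  show ?thesis using assms by (intro integrable_const_bound[where B=C]) auto
qed

lemma integral_sphere_pos:
  fixes f :: "'a::euclidean_space \<Rightarrow> real"
  assumes f: "integrable sphere_measure f" "\<And>y. f y \<ge> 0"
    and U: "open U" "p \<in> U" "norm p = 1" and pos: "\<And>y. y \<in> U \<Longrightarrow> norm y = 1 \<Longrightarrow> f y > 0"
  shows "(\<integral>y. f y \<partial>sphere_measure) > 0"
proof -
  have "(\<integral>y. f y \<partial>sphere_measure) \<noteq> 0"
  proof
    assume "(\<integral>y. f y \<partial>sphere_measure) = 0"
    then have "AE y in sphere_measure. f y = 0"
      using integral_nonneg_eq_0_iff_AE[OF f(1)] f(2) by auto
    then have "AE y in sphere_measure. y \<notin> U \<inter> sphere 0 1"
      by eventually_elim (use pos in fastforce)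
    moreover have "U \<inter> sphere 0 1 \<in> sets sphere_measure"
      using U by (auto intro!: sets.Int borel_open borel_closed)
    ultimately have "emeasure sphere_measure (U \<inter> sphere 0 1) = 0"
      by (subst (asm) AE_iff_measurable[of "U \<inter> sphere 0 1"]) auto
    with emeasure_sphere_open_pos[OF U] show False by simp
  qed
  moreover have "(\<integral>y. f y \<partial>sphere_measure) \<ge> 0" using f(2) by simp
  ultimately show ?thesis by simp
qed

text \<open>On unit vectors \<open>g (geod w y) = g (arccos (w \<bullet> y))\<close>; clamping the inner product to
  \<open>[-1, 1]\<close> turns this into a continuous, hence bounded and Borel, function of \<open>w \<bullet> y\<close>.\<close>

definition clamp_unit :: "real \<Rightarrow> real" where
  "clamp_unit t = max (-1) (min 1 t)"

definition psi_kernel :: "(real \<Rightarrow> real) \<Rightarrow> real \<Rightarrow> real" where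
  "psi_kernel g t = g (arccos (clamp_unit t))"

lemma arccos_clamp_unit: "arccos (clamp_unit t) \<in> {0..pi}"
  using arccos_lbound[of "clamp_unit t"] arccos_ubound[of "clamp_unit t"]
  by (auto simp: clamp_unit_def)

lemma psi_kernel_eq: "-1 \<le> t \<Longrightarrow> t \<le> 1 \<Longrightarrow> psi_kernel g t = g (arccos t)"
  by (simp add: psi_kernel_def clamp_unit_def)

lemma continuous_psi_kernel:
  assumes "continuous_on {0..pi} g"
  shows "continuous_on UNIV (psi_kernel g)"
proof -
  have "continuous_on UNIV (\<lambda>t. arccos (clamp_unit t))"
    unfolding clamp_unit_def
    by (rule continuous_on_compose2[OF continuous_on_arccos']) (auto intro!: continuous_intros)
  then show ?thesis
    unfolding psi_kernel_def by (rule continuous_on_compose2[OF assms]) (use arccos_clamp_unit in auto)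
qed

lemma psi_kernel_bounded:
  assumes "continuous_on {0..pi} g"
  obtains B where "\<And>t. \<bar>psi_kernel g t\<bar> \<le> B"
proof -
  have "compact (g ` {0..pi})" by (rule compact_continuous_image[OF assms]) simp
  then obtain B where "\<forall>x\<in>g ` {0..pi}. \<bar>x\<bar> \<le> B"
    using compact_imp_bounded bounded_real by metis
  then show ?thesis using arccos_clamp_unit by (intro that[of B]) (simp add: psi_kernel_def)
qed

lemma psi_kernel_strict_antimono:
  assumes "strict_mono_on {0..pi} g" and "-1 \<le> s" "s < t" "t \<le> 1"
  shows "psi_kernel g t < psi_kernel g s"
proof -
  have "arccos t < arccos s" using assms(2-4) by (intro arccos_less_arccos) auto
  then have "g (arccos t) < g (arccos s)"
    using assms(2-4) by (intro strict_mono_onD[OF assms(1)]) (auto intro: arccos_lbound arccos_ubound)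
  then show ?thesis using assms(2-4) by (simp add: psi_kernel_eq)
qed

lemma inner_unit_bounds:
  fixes w y :: "'a::euclidean_space"
  assumes "norm w = 1" "norm y = 1"
  shows "-1 \<le> w \<bullet> y" "w \<bullet> y \<le> 1"
  using Cauchy_Schwarz_ineq2[of w y] assms by auto

lemma psi_eq_integral:
  fixes K :: "'a::euclidean_space set"
  assumes "norm w = 1"
  shows "psi K g w = (\<integral>y. indicator (K \<inter> sphere 0 1) y * psi_kernel g (w \<bullet> y) \<partial>sphere_measure)"
  unfolding psi_def set_lebesgue_integral_def
proof (rule Bochner_Integration.integral_cong[OF refl])
  fix y :: 'a
  show "indicator (K \<inter> sphere 0 1) y *\<^sub>R g (geod w y) = indicator (K \<inter> sphere 0 1) y * psi_kernel g (w \<bullet> y)"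
    using inner_unit_bounds[OF assms, of y] by (cases "y \<in> K \<inter> sphere 0 1") (auto simp: geod_def psi_kernel_eq)
qed

lemma psi_diff:
  fixes K :: "'a::euclidean_space set"
  assumes K: "closed K" and g: "continuous_on {0..pi} g" and "norm w = 1" "norm v = 1"
  shows "psi K g w - psi K g v
    = (\<integral>y. indicator (K \<inter> sphere 0 1) y * (psi_kernel g (w \<bullet> y) - psi_kernel g (v \<bullet> y)) \<partial>sphere_measure)"
proof -
  obtain B where B: "\<And>t. \<bar>psi_kernel g t\<bar> \<le> B" using psi_kernel_bounded[OF g] by blast
  have [measurable]: "psi_kernel g \<in> borel_measurable borel"
    by (rule borel_measurable_continuous_onI[OF continuous_psi_kernel[OF g]])
  have [measurable]: "K \<inter> sphere 0 1 \<in> sets borel" using K by (intro borel_closed closed_Int) auto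
  have "integrable sphere_measure (\<lambda>y. indicator (K \<inter> sphere 0 1) y * psi_kernel g (u \<bullet> y))" for u
  proof (rule integrable_sphere_bounded[where C=B])
    show "\<bar>indicator (K \<inter> sphere 0 1) y * psi_kernel g (u \<bullet> y)\<bar> \<le> B" for y
      using B[of 0] B[of "u \<bullet> y"] by (auto simp: indicator_def)
  qed measurable
  then show ?thesis
    by (simp add: psi_eq_integral assms(3,4) right_diff_distrib)
qed

section \<open>Reflections\<close>

definition reflect :: "'a::euclidean_space \<Rightarrow> 'a \<Rightarrow> 'a" where
  "reflect h y = y - (2 * (h \<bullet> y)) *\<^sub>R h"

lemma linear_reflect: "linear (reflect h)"
  by (rule linearI) (simp_all add: reflect_def inner_add_right algebra_simps)

lemma inner_reflect: "reflect h w \<bullet> y = w \<bullet> y - 2 * (h \<bullet> w) * (h \<bullet> y)"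
  by (simp add: reflect_def inner_diff_left)

lemma reflect_self_adjoint: "reflect h x \<bullet> y = x \<bullet> reflect h y"
  by (simp add: reflect_def inner_diff_left inner_diff_right inner_commute)

lemma inner_reflect_axis: "norm h = 1 \<Longrightarrow> h \<bullet> reflect h y = - (h \<bullet> y)"
  by (simp add: reflect_def inner_diff_right dot_square_norm)

lemma reflect_reflect: "norm h = 1 \<Longrightarrow> reflect h (reflect h y) = y"
  by (simp add: reflect_def inner_diff_right dot_square_norm algebra_simps)

lemma norm_reflect:
  assumes "norm h = 1" shows "norm (reflect h y) = norm y"
  using reflect_self_adjoint[of h y "reflect h y"] reflect_reflect[OF assms]
  by (simp add: norm_eq_sqrt_inner)

lemma dist_reflect: "norm h = 1 \<Longrightarrow> dist (reflect h w) w = 2 * \<bar>h \<bullet> w\<bar>"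
  by (simp add: reflect_def dist_norm)

text \<open>For \<open>h \<bullet> w < 0\<close>, the reflected point \<open>R w\<close> is nearer than \<open>w\<close> to every point on
  the positive side of \<open>h\<close>, so the kernel is smaller there.\<close>

lemma psi_kernel_reflect_less:
  fixes h w y :: "'a::euclidean_space"
  assumes g: "strict_mono_on {0..pi} g"
    and h: "norm h = 1" and w: "norm w = 1" and hw: "h \<bullet> w < 0" and y: "norm y = 1" "h \<bullet> y > 0"
  shows "psi_kernel g (reflect h w \<bullet> y) < psi_kernel g (w \<bullet> y)"
proof -
  have "w \<bullet> y < reflect h w \<bullet> y" using hw y(2) by (simp add: inner_reflect mult_neg_pos)
  then show ?thesis
    using inner_unit_bounds[OF w y(1)] inner_unit_bounds[OF _ y(1), of "reflect h w"] norm_reflect[OF h]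
    by (intro psi_kernel_strict_antimono[OF g]) (simp_all add: w)
qed

lemma integral_reflect_odd:
  fixes F :: "'a::euclidean_space \<Rightarrow> real"
  assumes h: "norm h = 1" and [measurable]: "F \<in> borel_measurable borel" "S \<in> sets borel"
    and odd: "\<And>y. F (reflect h y) = - F y"
  shows "(\<integral>y. indicator S (reflect h y) * F y \<partial>sphere_measure)
    = - (\<integral>y. indicator S y * F y \<partial>sphere_measure)"
proof -
  note [measurable] = linear_borel_measurable[OF linear_reflect]
  have "(\<integral>y. indicator S (reflect h y) * F y \<partial>sphere_measure)
      = (\<integral>y. indicator S y * F (reflect h y) \<partial>sphere_measure)"
    using integral_sphere_isometry[OF linear_reflect norm_reflect[OF h],
        of "\<lambda>z. indicator S z * F (reflect h z)"]
    by (simp add: reflect_reflect[OF h])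
  then show ?thesis by (simp add: odd)
qed

text \<open>The integrand produced by the reflection substitution is nonnegative: points of the
  negative half \<open>S\<close> cancel against their mirror images, which lie in \<open>K\<close>, and the remaining
  points lie on the nonnegative side of \<open>h\<close>.\<close>

lemma reflect_weight_nonneg:
  fixes K :: "'a::euclidean_space set" and F :: "'a \<Rightarrow> real"
  assumes h: "norm h = 1"
    and reflect_back: "\<And>y. y \<in> K \<Longrightarrow> h \<bullet> y < 0 \<Longrightarrow> reflect h y \<in> K"
    and F_nonneg: "\<And>y. y \<in> K \<Longrightarrow> norm y = 1 \<Longrightarrow> h \<bullet> y \<ge> 0 \<Longrightarrow> F y \<ge> 0"
  defines "A \<equiv> K \<inter> sphere 0 1" and "S \<equiv> K \<inter> sphere 0 1 \<inter> {y. h \<bullet> y < 0}"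
  shows "(indicator A y - indicator S y - indicator S (reflect h y)) * F y \<ge> 0"
proof (cases "y \<in> S")
  case True
  then have "reflect h y \<notin> S" by (simp add: S_def inner_reflect_axis[OF h])
  then show ?thesis using True by (simp add: A_def S_def)
next
  case y_notin: False
  show ?thesis
  proof (cases "reflect h y \<in> S")
    case True
    then have "y \<in> A"
      using reflect_back[of "reflect h y"]
      by (auto simp: S_def A_def reflect_reflect[OF h] norm_reflect[OF h])
    then show ?thesis using True y_notin by simp
  next
    case False
    then show ?thesis
      using y_notin F_nonneg by (cases "y \<in> A") (auto simp: A_def S_def)
  qed
qed

section \<open>The descent lemma\<close>

lemma psi_reflect_less:
  fixes K :: "'a::euclidean_space set" and g :: "real \<Rightarrow> real"
  assumes K: "closed K" and g: "continuous_on {0..pi} g" "strict_mono_on {0..pi} g"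
    and h: "norm h = 1" and w: "norm w = 1" and hw: "h \<bullet> w < 0"
    and reflect_back: "\<And>y. y \<in> K \<Longrightarrow> h \<bullet> y < 0 \<Longrightarrow> reflect h y \<in> K"
    and U: "open U" "p \<in> U" "norm p = 1"
    and gap: "\<And>y. y \<in> U \<Longrightarrow> norm y = 1 \<Longrightarrow> y \<in> K \<and> h \<bullet> y > 0 \<and> reflect h y \<notin> K"
  shows "psi K g (reflect h w) < psi K g w"
proof -
  let ?R = "reflect h" and ?\<sigma> = "sphere_measure :: 'a measure"
  define v where "v = ?R w"
  define A where "A = K \<inter> sphere (0::'a) 1"
  define S where "S = A \<inter> {y. h \<bullet> y < 0}"
  define F where "F y = psi_kernel g (w \<bullet> y) - psi_kernel g (v \<bullet> y)" for y
  text \<open>After the substitution \<open>y := R y\<close> on \<open>S\<close>, \<open>psi w - psi v\<close> becomes the integral of:\<close>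
  define \<Phi> where "\<Phi> y = (indicator A y - indicator S y - indicator S (?R y)) * F y" for y
  have v: "norm v = 1" using norm_reflect[OF h] w by (simp add: v_def)
  note [measurable] = borel_measurable_continuous_onI[OF continuous_psi_kernel[OF g(1)]]
    linear_borel_measurable[OF linear_reflect]
  have A_borel [measurable]: "A \<in> sets borel"
    unfolding A_def using K by (intro borel_closed closed_Int) auto
  have [measurable]: "S \<in> sets borel"
    unfolding S_def by (rule sets.Int[OF A_borel borel_open[OF open_halfspace_lt]])
  have [measurable]: "F \<in> borel_measurable borel" unfolding F_def by measurable
  have F_reflect: "F (?R y) = - F y" for y
    by (simp add: F_def v_def reflect_self_adjoint reflect_reflect[OF h])
  have F_pos: "F y > 0" if "norm y = 1" "h \<bullet> y > 0" for y
    using psi_kernel_reflect_less[OF g(2) h w hw that] by (simp add: F_def v_def)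
  have F_nonneg: "F y \<ge> 0" if "norm y = 1" "h \<bullet> y \<ge> 0" for y
    using F_pos[OF that(1)] that(2) by (cases "h \<bullet> y = 0") (auto simp: F_def v_def inner_reflect)
  have \<Phi>_nonneg: "\<Phi> y \<ge> 0" for y
    unfolding \<Phi>_def A_def S_def
    by (rule reflect_weight_nonneg[OF h reflect_back]) (use F_nonneg in auto)
  have \<Phi>_pos: "\<Phi> y > 0" if "y \<in> U" "norm y = 1" for y
    using gap[OF that] F_pos[OF that(2)] that(2) by (simp add: \<Phi>_def A_def S_def)
  obtain B where B: "\<And>t. \<bar>psi_kernel g t\<bar> \<le> B" using psi_kernel_bounded[OF g(1)] by blast
  have integrable: "integrable ?\<sigma> (\<lambda>y. c y * F y)"
    if [measurable]: "c \<in> borel_measurable borel" and "\<And>y. \<bar>c y\<bar> \<le> 1" for c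
  proof (rule integrable_sphere_bounded[where C="2 * B"])
    show "\<bar>c y * F y\<bar> \<le> 2 * B" for y
      using B[of "w \<bullet> y"] B[of "v \<bullet> y"] mult_mono[OF that(2)[of y], of "\<bar>F y\<bar>" "2 * B"]
      by (auto simp: F_def abs_mult)
  qed measurable
  have cancel: "(\<integral>y. indicator S (?R y) * F y \<partial>?\<sigma>) = - (\<integral>y. indicator S y * F y \<partial>?\<sigma>)"
    by (rule integral_reflect_odd[OF h]) (simp_all add: F_reflect)
  have "psi K g w - psi K g v = (\<integral>y. indicator A y * F y \<partial>?\<sigma>)"
    using psi_diff[OF K g(1) w v] by (simp add: A_def F_def)
  also have "\<dots> = (\<integral>y. \<Phi> y \<partial>?\<sigma>)"
    using cancel unfolding \<Phi>_def left_diff_distrib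
    by (subst Bochner_Integration.integral_diff; (intro integrable Bochner_Integration.integrable_diff)?;
        simp add: indicator_def)+
  also have "\<dots> > 0"
  proof (rule integral_sphere_pos[OF _ \<Phi>_nonneg U \<Phi>_pos])
    show "integrable ?\<sigma> \<Phi>"
      unfolding \<Phi>_def by (rule integrable) (auto simp: indicator_def S_def)
  qed
  finally show ?thesis by (simp add: v_def)
qed

section \<open>Geometry of the cone\<close>

lemma interior_cone_add:
  fixes K :: "'a::euclidean_space set"
  assumes K: "convex_cone K" and z: "z \<in> interior K" and k: "k \<in> K"
  shows "z + k \<in> interior K"
proof -
  obtain r where r: "r > 0" "ball z r \<subseteq> K" using z mem_interior by blast
  have "ball (z + k) r \<subseteq> K"
  proof
    fix x assume "x \<in> ball (z + k) r"
    then have "x - k \<in> K" using r by (auto simp: dist_norm algebra_simps)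
    then show "x \<in> K" using convex_cone_add[OF K _ k] by fastforce
  qed
  then show ?thesis using r mem_interior by blast
qed

lemma interior_cone_scale:
  fixes K :: "'a::euclidean_space set"
  assumes K: "convex_cone K" and z: "z \<in> interior K" and c: "c > 0"
  shows "c *\<^sub>R z \<in> interior K"
proof -
  obtain r where r: "r > 0" "ball z r \<subseteq> K" using z mem_interior by blast
  have "ball (c *\<^sub>R z) (c * r) \<subseteq> K"
  proof
    fix x assume "x \<in> ball (c *\<^sub>R z) (c * r)"
    moreover have "c *\<^sub>R z - x = c *\<^sub>R (z - x /\<^sub>R c)" using c by (simp add: algebra_simps)
    ultimately have "c * norm (z - x /\<^sub>R c) < c * r" using c by (simp add: dist_norm)
    then have "x /\<^sub>R c \<in> K" using r c by (auto simp: dist_norm)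
    then show "x \<in> K" using convex_cone_scaleR[OF K, of c "x /\<^sub>R c"] c by simp
  qed
  then show ?thesis using r c mem_interior by (metis mult_pos_pos)
qed

lemma zero_notin_interior_proper_cone:
  fixes K :: "'a::euclidean_space set"
  assumes "proper_cone K"
  shows "0 \<notin> interior K"
proof
  assume "0 \<in> interior K"
  then obtain r where r: "r > 0" "ball 0 r \<subseteq> K" using mem_interior by blast
  obtain a where a: "a \<noteq> 0" "K \<subseteq> {x. a \<bullet> x \<le> 0}" using assms by (auto simp: proper_cone_def)
  let ?x = "(r / 2 / norm a) *\<^sub>R a"
  have "?x \<in> K" using r a by (intro subsetD[OF r(2)]) simp
  then have "a \<bullet> ?x \<le> 0" using a by blast
  moreover have "a \<bullet> ?x = r / 2 * norm a" using a by (simp add: dot_square_norm power2_eq_square)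
  moreover have "r / 2 * norm a > 0" using r a by simp
  ultimately show False by linarith
qed

lemma unit_interior_point:
  fixes K :: "'a::euclidean_space set"
  assumes "convex_cone K" "proper_cone K" "interior K \<noteq> {}"
  obtains p where "p \<in> interior K" "norm p = 1"
proof -
  obtain z where z: "z \<in> interior K" using assms(3) by blast
  then have "z \<noteq> 0" using zero_notin_interior_proper_cone[OF assms(2)] by auto
  then show ?thesis
    using that interior_cone_scale[OF assms(1) z, of "inverse (norm z)"] by simp
qed

lemma cone_inter_neg_dual:
  assumes "x \<in> K" "x \<in> uminus ` dual_cone K"
  shows "x = 0"
proof -
  obtain d where "d \<in> dual_cone K" "x = - d" using assms(2) by blast
  then have "- (x \<bullet> x) \<ge> 0" using assms(1) by (auto simp: dual_cone_def)
  then have "x \<bullet> x = 0" using inner_ge_zero[of x] by linarith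
  then show ?thesis by simp
qed

lemma dual_cone_pos_on_interior:
  fixes K :: "'a::euclidean_space set"
  assumes h: "h \<in> dual_cone K" "h \<noteq> 0" and y: "y \<in> interior K"
  shows "h \<bullet> y > 0"
proof -
  obtain r where r: "r > 0" "ball y r \<subseteq> K" using y mem_interior by blast
  have "y - (r / 2 / norm h) *\<^sub>R h \<in> K" using r h(2) by (intro subsetD[OF r(2)]) (simp add: dist_norm)
  then have "h \<bullet> (y - (r / 2 / norm h) *\<^sub>R h) \<ge> 0" using h(1) by (auto simp: dual_cone_def inner_commute)
  then have "h \<bullet> y \<ge> r / 2 * norm h" using h(2) by (simp add: inner_diff_right dot_square_norm power2_eq_square)
  moreover have "r / 2 * norm h > 0" using r h(2) by simp
  ultimately show ?thesis by linarith
qed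

lemma separating_dual_vector:
  fixes K :: "'a::euclidean_space set"
  assumes K: "closed K" "convex_cone K" and w: "w \<notin> K"
  obtains h where "norm h = 1" "h \<in> dual_cone K" "h \<bullet> w < 0"
proof -
  have "convex K" using K(2) by (simp add: convex_cone_def)
  then obtain a b where ab: "a \<bullet> w < b" "\<forall>x\<in>K. a \<bullet> x > b"
    using separating_hyperplane_closed_point[OF _ K(1) w] by blast
  have b: "b < 0" using ab(2) convex_cone_contains_0[OF K(2)] by force
  have a_dual: "a \<bullet> x \<ge> 0" if x: "x \<in> K" for x
  proof (rule ccontr)
    assume "\<not> a \<bullet> x \<ge> 0"
    then have "(b / (a \<bullet> x)) *\<^sub>R x \<in> K" using b by (intro convex_cone_scaleR[OF K(2) _ x]) (simp add: divide_nonpos_neg)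
    then show False using ab(2) \<open>\<not> a \<bullet> x \<ge> 0\<close> by fastforce
  qed
  have "a \<noteq> 0" using ab(1) b by auto
  then show ?thesis
    using that[of "a /\<^sub>R norm a"] a_dual ab(1) b
    by (auto simp: dual_cone_def inner_commute mult_pos_neg)
qed

text \<open>A convex set with nonempty interior lies in the closure of its interior, so an open
  halfspace meeting it also meets its interior.\<close>

lemma interior_point_in_halfspace:
  fixes K :: "'a::euclidean_space set"
  assumes "convex K" "interior K \<noteq> {}" "u \<in> K" "w \<bullet> u < 0"
  obtains u' where "u' \<in> interior K" "w \<bullet> u' < 0"
proof -
  have "u \<in> closure (interior K)"
    using assms(3) closure_subset convex_closure_interior[OF assms(1,2)] by blast
  then have "{x. w \<bullet> x < 0} \<inter> interior K \<noteq> {}"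
    using assms(4) open_Int_closure_eq_empty[OF open_halfspace_lt, of w 0 "interior K"] by blast
  then show ?thesis using that by blast
qed

text \<open>If the hyperplane \<open>w\<^sup>\<bottom>\<close> cuts the interior of the cone, then there are unit interior
  points \<open>h\<close> with \<open>h \<bullet> w\<close> negative and arbitrarily close to 0: move from \<open>u\<close> along \<open>v\<close>
  towards the hyperplane and normalize.\<close>

lemma unit_interior_near_hyperplane:
  fixes K :: "'a::euclidean_space set"
  assumes K: "convex_cone K" "proper_cone K"
    and u: "u \<in> interior K" "w \<bullet> u < 0" and v: "v \<in> interior K" "w \<bullet> v > 0" and e: "e > 0"
  obtains h where "h \<in> interior K" "norm h = 1" "- e < h \<bullet> w" "h \<bullet> w < 0"
proof -
  define k where "k t = u + t *\<^sub>R v" for t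
  define l where "l = - (w \<bullet> u) / (w \<bullet> v)"
  define f where "f t = (w \<bullet> k t) / norm (k t)" for t
  have l: "l > 0" using u v by (simp add: l_def divide_neg_pos)
  have k_int: "k t \<in> interior K" if "t \<ge> 0" for t
    using interior_cone_add[OF K(1) u(1) convex_cone_scaleR[OF K(1) that]] v(1) interior_subset
    by (auto simp: k_def)
  have k_nonzero: "k t \<noteq> 0" if "t \<ge> 0" for t
    using k_int[OF that] zero_notin_interior_proper_cone[OF K(2)] by auto
  have wk: "w \<bullet> k t = (t - l) * (w \<bullet> v)" for t
    using v(2) by (simp add: k_def l_def inner_add_right field_simps)
  have "isCont f l"
    using k_nonzero[of l] l unfolding f_def k_def by (intro continuous_intros) auto
  then have "(f \<longlongrightarrow> 0) (at l)" by (simp add: isCont_def f_def wk)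
  then have "(f \<longlongrightarrow> 0) (at_left l)" by (rule tendsto_mono[rotated]) (simp add: at_le)
  then have "\<forall>\<^sub>F t in at_left l. - e < f t \<and> t \<in> {0<..<l}"
    using e l by (intro eventually_conj order_tendstoD(1) eventually_at_left_real) auto
  then obtain t where t: "- e < f t" "0 < t" "t < l"
    using eventually_happens'[OF trivial_limit_at_left_real] by auto
  define h where "h = k t /\<^sub>R norm (k t)"
  have "norm (k t) > 0" using k_nonzero[of t] t by simp
  then have "h \<in> interior K" "norm h = 1" "h \<bullet> w = f t"
    using interior_cone_scale[OF K(1) k_int[of t], of "inverse (norm (k t))"] t
    by (auto simp: h_def f_def inner_commute divide_inverse_commute)
  moreover have "f t < 0"
    using t v(2) \<open>norm (k t) > 0\<close> by (simp add: f_def wk divide_neg_pos mult_neg_pos)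
  ultimately show ?thesis using that t by simp
qed

text \<open>Reflection in an interior direction \<open>h\<close> with \<open>h \<bullet> w < 0\<close> decreases \<open>psi\<close>: such a
  reflection maps \<open>K \<inter> {h \<bullet> y < 0}\<close> into \<open>K\<close>, and near \<open>h\<close> the cone points have mirror
  images outside \<open>K\<close> (the mirror image of \<open>h\<close> is \<open>-h \<notin> K\<close>).\<close>

lemma psi_reflect_interior_less:
  fixes K :: "'a::euclidean_space set" and g :: "real \<Rightarrow> real"
  assumes K: "closed K" "convex_cone K" "proper_cone K"
    and g: "continuous_on {0..pi} g" "strict_mono_on {0..pi} g"
    and h: "norm h = 1" "h \<in> interior K" and w: "norm w = 1" and hw: "h \<bullet> w < 0"
  shows "psi K g (reflect h w) < psi K g w"
proof -
  have hK: "h \<in> K" using h(2) interior_subset by blast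
  have reflect_back: "reflect h y \<in> K" if "y \<in> K" "h \<bullet> y < 0" for y
    using convex_cone_add[OF K(2) that(1) convex_cone_scaleR[OF K(2) _ hK, of "- 2 * (h \<bullet> y)"]]
      that(2) by (simp add: reflect_def)
  define U where "U = interior K \<inter> {y. h \<bullet> y > 0} \<inter> reflect h -` (- K)"
  have "continuous_on UNIV (reflect h)"
    using linear_reflect[of h] by (intro linear_continuous_on) (simp add: linear_conv_bounded_linear)
  then have "open U"
    unfolding U_def using K(1) by (intro open_Int open_interior open_halfspace_gt open_vimage) auto
  have "- h \<notin> K"
    using interior_cone_add[OF K(2) h(2), of "- h"] zero_notin_interior_proper_cone[OF K(3)] by auto
  moreover have "reflect h h = - h" using h(1) by (simp add: reflect_def dot_square_norm scaleR_2)
  ultimately have "h \<in> U" using h by (simp add: U_def dot_square_norm)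
  show ?thesis
    by (rule psi_reflect_less[OF K(1) g h(1) w hw reflect_back \<open>open U\<close> \<open>h \<in> U\<close> h(1)])
      (auto simp: U_def dest: subsetD[OF interior_subset])
qed

lemma local_min_in_dual_cones:
  fixes K :: "'a::euclidean_space set" and g :: "real \<Rightarrow> real"
  assumes K: "closed K" "convex_cone K" "proper_cone K" "interior K \<noteq> {}"
    and g: "continuous_on {0..pi} g" "strict_mono_on {0..pi} g"
    and w: "norm w = 1" and e: "e > 0"
    and local_min: "\<forall>v\<in>sphere 0 1. dist v w < e \<longrightarrow> psi K g w \<le> psi K g v"
  shows "w \<in> dual_cone K \<union> uminus ` dual_cone K"
proof (rule ccontr)
  assume w_notin: "w \<notin> dual_cone K \<union> uminus ` dual_cone K"
  then obtain u where "u \<in> K" "w \<bullet> u < 0" by (auto simp: dual_cone_def not_le)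
  moreover have "- w \<notin> dual_cone K" using w_notin by (metis UnCI image_eqI minus_minus)
  then obtain v where "v \<in> K" "(- w) \<bullet> v < 0" by (auto simp: dual_cone_def not_le)
  moreover have "convex K" using K(2) by (simp add: convex_cone_def)
  ultimately obtain u' v' where u': "u' \<in> interior K" "w \<bullet> u' < 0"
    and v': "v' \<in> interior K" "(- w) \<bullet> v' < 0"
    using interior_point_in_halfspace K(4) by metis
  obtain h where h: "h \<in> interior K" "norm h = 1" "- (e / 2) < h \<bullet> w" "h \<bullet> w < 0"
    using unit_interior_near_hyperplane[OF K(2,3) u' v'(1), of "e / 2"] v'(2) e by auto
  have "dist (reflect h w) w < e" "reflect h w \<in> sphere 0 1"
    using h w by (simp_all add: dist_reflect norm_reflect)
  then have "psi K g w \<le> psi K g (reflect h w)" using local_min by blast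
  moreover have "psi K g (reflect h w) < psi K g w"
    by (rule psi_reflect_interior_less[OF K(1-3) g h(2,1) w h(4)])
  ultimately show False by simp
qed

lemma global_min_in_cone:
  fixes K :: "'a::euclidean_space set" and g :: "real \<Rightarrow> real"
  assumes K: "closed K" "convex_cone K" "proper_cone K" "interior K \<noteq> {}"
    and g: "continuous_on {0..pi} g" "strict_mono_on {0..pi} g"
    and w: "norm w = 1" and global_min: "\<forall>v\<in>sphere 0 1. psi K g w \<le> psi K g v"
  shows "w \<in> K"
proof (rule ccontr)
  assume "w \<notin> K"
  then obtain h where h: "norm h = 1" "h \<in> dual_cone K" "h \<bullet> w < 0"
    using separating_dual_vector[OF K(1,2)] by blast
  then have h_nonneg: "h \<bullet> y \<ge> 0" if "y \<in> K" for y
    using that h(2) by (auto simp: dual_cone_def inner_commute)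
  have h_nonzero: "h \<noteq> 0" using h(1) by auto
  obtain p where p: "p \<in> interior K" "norm p = 1" using unit_interior_point[OF K(2-4)] by blast
  have "psi K g (reflect h w) < psi K g w"
  proof (rule psi_reflect_less[OF K(1) g h(1) w h(3) _ open_interior p])
    show "y \<in> K \<Longrightarrow> h \<bullet> y < 0 \<Longrightarrow> reflect h y \<in> K" for y using h_nonneg by force
    show "y \<in> K \<and> h \<bullet> y > 0 \<and> reflect h y \<notin> K" if "y \<in> interior K" for y
      using that dual_cone_pos_on_interior[OF h(2) h_nonzero that] h_nonneg[of "reflect h y"] h(1)
      by (auto simp: inner_reflect_axis dest: subsetD[OF interior_subset])
  qed
  moreover have "reflect h w \<in> sphere 0 1" using h(1) w by (simp add: norm_reflect)
  ultimately show False using global_min by force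
qed

theorem mainTheorem5:
  fixes K :: "'a::euclidean_space set" and g :: "real \<Rightarrow> real"
  assumes "closed K" and "convex_cone K" and "proper_cone K" and "interior K \<noteq> {}"
    and "continuous_on {0..pi} g" and "strict_mono_on {0..pi} g"
  shows "(\<forall>w\<in>sphere 0 1. (\<exists>e>0. \<forall>v\<in>sphere 0 1. dist v w < e \<longrightarrow> psi K g w \<le> psi K g v)
            \<longrightarrow> w \<in> dual_cone K \<union> uminus ` dual_cone K)
       \<and> (\<forall>w\<in>sphere 0 1. (\<forall>v\<in>sphere 0 1. psi K g w \<le> psi K g v)
            \<longrightarrow> w \<in> K \<inter> dual_cone K)"
proof (intro conjI ballI impI)
  fix w :: 'a assume "w \<in> sphere 0 1"
    and "\<exists>e>0. \<forall>v\<in>sphere 0 1. dist v w < e \<longrightarrow> psi K g w \<le> psi K g v"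
  then show "w \<in> dual_cone K \<union> uminus ` dual_cone K"
    using local_min_in_dual_cones[OF assms] by auto
next
  fix w :: 'a assume w: "w \<in> sphere 0 1" and global_min: "\<forall>v\<in>sphere 0 1. psi K g w \<le> psi K g v"
  then have "w \<in> dual_cone K \<union> uminus ` dual_cone K"
    using local_min_in_dual_cones[OF assms, of w 1] by simp
  moreover have "w \<in> K" using global_min_in_cone[OF assms] w global_min by simp
  moreover have "w \<noteq> 0" using w by auto
  ultimately show "w \<in> K \<inter> dual_cone K" using cone_inter_neg_dual by blast
qed

end
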